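(* Let $\mathrm{WCM}_N$ be the random directed multigraph on $[N]$ in which each vertex $i$ has exactly two out-going edges, pointing to $U_i^1$ and $U_i^2$, where $(U_i^1,U_i^2)_{i\in[N]}$ are $2N$ independent uniform random variables on $[N]$. Consider the simple symmetric random walk on $\mathrm{WCM}_N$, which from vertex $i$ moves along each of its two out-going edges with probability $1/2$. Then with high probability (as $N\to\infty$) this random walk has a unique stationary distribution, and this stationary distribution is supported on the largest strongly connected component of $\mathrm{WCM}_N$.
   Context: "With high probability" means with probability tending to $1$ as $N\to\infty$. A strongly connected component is a maximal vertex set in which any two vertices are joined by directed paths in both directions. *)

theory Defs
  imports "HOL-Probability.Probability"
begin

text \<open>Vertices are 0..N-1. A configuration U assigns to each vertex i the pair
  (U_i^1, U_i^2) of heads of its two out-going edges.\<close>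

definition wcm_space :: "nat \<Rightarrow> (nat \<Rightarrow> nat \<times> nat) set" where
  "wcm_space N = Pi\<^sub>E {..<N} (\<lambda>_. {..<N} \<times> {..<N})"

text \<open>The law of WCM_N: 2N independent uniform variables on [N].\<close>
definition WCM :: "nat \<Rightarrow> (nat \<Rightarrow> nat \<times> nat) pmf" where
  "WCM N = pmf_of_set (wcm_space N)"

definition wcm_edges :: "nat \<Rightarrow> (nat \<Rightarrow> nat \<times> nat) \<Rightarrow> (nat \<times> nat) set" where
  "wcm_edges N U = {(i, j). i < N \<and> j < N \<and> (fst (U i) = j \<or> snd (U i) = j)}"

definition reach :: "nat \<Rightarrow> (nat \<Rightarrow> nat \<times> nat) \<Rightarrow> nat \<Rightarrow> nat \<Rightarrow> bool" where
  "reach N U i j \<longleftrightarrow> (i, j) \<in> (wcm_edges N U)\<^sup>*"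

definition is_scc :: "nat \<Rightarrow> (nat \<Rightarrow> nat \<times> nat) \<Rightarrow> nat set \<Rightarrow> bool" where
  "is_scc N U C \<longleftrightarrow> C \<noteq> {} \<and> C \<subseteq> {..<N} \<and>
     (\<forall>i\<in>C. \<forall>j\<in>C. reach N U i j \<and> reach N U j i) \<and>
     (\<forall>D. D \<subseteq> {..<N} \<and> C \<subseteq> D \<and> (\<forall>i\<in>D. \<forall>j\<in>D. reach N U i j \<and> reach N U j i) \<longrightarrow> D = C)"

definition largest_scc :: "nat \<Rightarrow> (nat \<Rightarrow> nat \<times> nat) \<Rightarrow> nat set \<Rightarrow> bool" where
  "largest_scc N U C \<longleftrightarrow> is_scc N U C \<and> (\<forall>D. is_scc N U D \<and> D \<noteq> C \<longrightarrow> card D < card C)"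

text \<open>Transition kernel of the simple random walk (multi-edges and loops counted).\<close>
definition trans :: "(nat \<Rightarrow> nat \<times> nat) \<Rightarrow> nat \<Rightarrow> nat \<Rightarrow> real" where
  "trans U i j = (if fst (U i) = j then 1/2 else 0) + (if snd (U i) = j then 1/2 else 0)"

text \<open>Stationary distributions on [N], represented as functions vanishing outside [N].\<close>
definition stationary :: "nat \<Rightarrow> (nat \<Rightarrow> nat \<times> nat) \<Rightarrow> (nat \<Rightarrow> real) \<Rightarrow> bool" where
  "stationary N U \<pi> \<longleftrightarrow> (\<forall>i. \<pi> i \<ge> 0) \<and> (\<forall>i\<ge>N. \<pi> i = 0) \<and> (\<Sum>i<N. \<pi> i) = 1 \<and>
     (\<forall>j<N. (\<Sum>i<N. \<pi> i * trans U i j) = \<pi> j)"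

definition good_event :: "nat \<Rightarrow> (nat \<Rightarrow> nat \<times> nat) set" where
  "good_event N = {U. (\<exists>!\<pi>. stationary N U \<pi>) \<and>
     (\<exists>C. largest_scc N U C \<and> (\<forall>\<pi>. stationary N U \<pi> \<longrightarrow> (\<forall>i<N. \<pi> i \<noteq> 0 \<longrightarrow> i \<in> C)))}"

end

theory Submission
  imports Defs "HOL-Real_Asymp.Real_Asymp" "Jordan_Normal_Form.Determinant"
begin

text \<open>Call a vertex set closed if no edge leaves it. A fixed k-set is closed with probability
  (k/N)^(2k), so a nonempty closed set of at most N/2 vertices exists with probability at most
  the sum over 1 \<le> k \<le> N/2 of C(N,k) (k/N)^(2k). For k \<le> 3N/10 the terms are at
  most (3k/N)^k; beyond that they grow geometrically up to k = N/2, where C(2m,m) \<le> 4^m /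
  sqrt(3m+1) makes them O(N^(-1/2)). So with high probability all nonempty closed sets have
  more than N/2 vertices. Then any two of them meet and there is a least one, C. Every vertex
  reaches C, so C is a strongly connected component, the largest one as all others are
  disjoint from it. The support of a stationary distribution is closed, hence contains C; its
  part outside C is closed as well (the complement of C receives mass only from itself, so by
  conservation none of its mass leaves it) and misses C, so it is empty. For stationary \<pi>
  and \<sigma>, \<pi> - t \<sigma> with t maximal subject to nonnegativity is a nonnegative
  invariant vector vanishing at a point of C, hence zero. Existence: P - I is singular, and
  the absolute value of a left null vector is invariant.\<close>

lemma bernoulli_second_order:
  fixes x :: real
  assumes "x \<ge> 0"
  shows "1 + real n * x + real n * (real n - 1) / 2 * x^2 \<le> (1 + x)^n"
proof (induction n)
  case 0
  then show ?case by simp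
next
  case (Suc n)
  have "(1 + real n * x + real n * (real n - 1) / 2 * x^2) * (1 + x) =
      1 + real (Suc n) * x + real (Suc n) * (real (Suc n) - 1) / 2 * x^2
        + real n * (real n - 1) / 2 * x^3"
    by (simp add: field_simps power2_eq_square power3_eq_cube)
  moreover have "real n * (real n - 1) / 2 * x^3 \<ge> 0"
    using assms by (cases n) auto
  ultimately have "1 + real (Suc n) * x + real (Suc n) * (real (Suc n) - 1) / 2 * x^2
      \<le> (1 + real n * x + real n * (real n - 1) / 2 * x^2) * (1 + x)"
    by linarith
  also have "\<dots> \<le> (1 + x)^n * (1 + x)"
    using Suc assms by (intro mult_right_mono) auto
  finally show ?case by (simp add: mult.commute)
qed

lemma succ_pow_ge:
  assumes "k \<ge> 2"
  shows "9/4 * real k ^ k \<le> (real k + 1)^k"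
proof -
  have k: "real k > 0" using assms by simp
  have "1 + real k * (1 / real k) + real k * (real k - 1) / 2 * (1 / real k)^2 \<le> (1 + 1 / real k)^k"
    by (rule bernoulli_second_order) simp
  moreover have "1 + real k * (1 / real k) + real k * (real k - 1) / 2 * (1 / real k)^2
      = 2 + (real k - 1) / (2 * real k)"
    using k by (simp add: field_simps power2_eq_square)
  moreover have "(real k - 1) / (2 * real k) \<ge> 1/4"
    using assms k by (simp add: field_simps)
  ultimately have "9/4 \<le> (1 + 1 / real k)^k"
    by linarith
  then have "9/4 * real k ^ k \<le> (1 + 1 / real k)^k * real k ^ k"
    using k by (intro mult_right_mono) auto
  also have "\<dots> = (real k + 1)^k"
    using k by (simp add: power_mult_distrib[symmetric] field_simps)
  finally show ?thesis .
qed

lemma succ_pow_double_ge: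
  assumes "k \<ge> 2"
  shows "81/16 * real k ^ (2*k) \<le> (real k + 1)^(2*k)"
proof -
  have "(9/4 * real k ^ k)^2 \<le> ((real k + 1)^k)^2"
    using succ_pow_ge[OF assms] by (intro power_mono) auto
  moreover have "(9/4 * real k ^ k)^2 = 81/16 * (real k ^ k)^2"
    by (simp add: power2_eq_square)
  moreover have "(real k ^ k)^2 = real k ^ (2*k)" "((real k + 1)^k)^2 = (real k + 1)^(2*k)"
    by (simp_all add: power_mult[symmetric] mult.commute)
  ultimately show ?thesis
    by simp
qed

lemma succ_pow_le:
  assumes "k \<ge> 1"
  shows "(real k + 1)^k \<le> 3 * real k ^ k"
proof -
  have k: "real k > 0" using assms by simp
  have "(1 + 1 / real k)^k \<le> exp (1 / real k)^k"
    by (intro power_mono) (auto simp: add.commute)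
  also have "\<dots> = exp 1"
    using k by (simp add: exp_of_nat_mult[symmetric])
  also have "\<dots> \<le> 3"
    using e_less_272 by simp
  finally have "(1 + 1 / real k)^k * real k ^ k \<le> 3 * real k ^ k"
    using k by (intro mult_right_mono) auto
  moreover have "(1 + 1 / real k)^k * real k ^ k = (real k + 1)^k"
    using k by (simp add: power_mult_distrib[symmetric] field_simps)
  ultimately show ?thesis by simp
qed

lemma fact_ge_pow_third: "(real k / 3)^k \<le> fact k"
proof (induction k)
  case 0
  then show ?case by simp
next
  case (Suc k)
  have "(real (Suc k) / 3)^(Suc k) = (real k + 1)^k * (real k + 1) / 3^(Suc k)"
    by (simp add: power_divide field_simps)
  also have "\<dots> \<le> 3 * real k ^ k * (real k + 1) / 3^(Suc k)"
  proof (cases "k = 0")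
    case False
    then show ?thesis
      using succ_pow_le[of k] by (intro divide_right_mono mult_right_mono) auto
  qed simp
  also have "\<dots> = (real k / 3)^k * (real k + 1)"
    by (simp add: power_divide field_simps)
  also have "\<dots> \<le> fact k * (real k + 1)"
    using Suc by (intro mult_right_mono) auto
  also have "\<dots> = fact (Suc k)"
    by (simp add: algebra_simps)
  finally show ?case .
qed

lemma Suc_times_central_binomial:
  "Suc m * ((2 * Suc m) choose Suc m) = 2 * (2 * m + 1) * ((2 * m) choose m)"
proof -
  have two: "2 * Suc m = Suc (Suc (2 * m))" by simp
  have sym: "Suc (2 * m) choose Suc m = Suc (2 * m) choose m"
    using binomial_symmetric[of "Suc m" "Suc (2 * m)"] by simp
  have "Suc m * (Suc m * ((2 * Suc m) choose Suc m)) = Suc m * (Suc (Suc (2 * m)) * (Suc (2 * m) choose m))"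
    by (simp only: two Suc_times_binomial)
  also have "\<dots> = Suc (Suc (2 * m)) * (Suc m * (Suc (2 * m) choose Suc m))"
    by (simp only: sym mult.left_commute)
  also have "\<dots> = Suc (Suc (2 * m)) * (Suc (2 * m) * ((2 * m) choose m))"
    by (simp only: Suc_times_binomial)
  also have "\<dots> = Suc m * (2 * (2 * m + 1) * ((2 * m) choose m))"
    by (simp del: binomial_Suc_Suc)
  finally show ?thesis
    by (simp only: mult_cancel1 nat.distinct simp_thms)
qed

lemma central_binomial_sq_le: "real ((2*m) choose m)^2 * (3 * real m + 1) \<le> 16^m"
proof (induction m)
  case 0
  then show ?case by simp
next
  case (Suc m)
  define c where "c = real ((2*m) choose m)"
  have "real (Suc m) * real ((2 * Suc m) choose Suc m) = 2 * (2 * real m + 1) * c"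
    using arg_cong[OF Suc_times_central_binomial[of m], of real] unfolding c_def
    by (simp del: binomial_Suc_Suc add: algebra_simps)
  then have step: "real ((2 * Suc m) choose Suc m) = 2 * (2 * real m + 1) * c / (real m + 1)"
    by (simp add: field_simps)
  have "real ((2 * Suc m) choose Suc m)^2 * (3 * real (Suc m) + 1)
      = 4 * (2 * real m + 1)^2 * (3 * real m + 4) / (real m + 1)^2 * c^2"
    unfolding step by (simp add: field_simps power2_eq_square)
  also have "\<dots> \<le> 16 * (3 * real m + 1) * c^2"
  proof -
    have "4 * (2 * real m + 1)^2 * (3 * real m + 4) \<le> 16 * (3 * real m + 1) * (real m + 1)^2"
      by (simp add: algebra_simps power2_eq_square)
    then have "4 * (2 * real m + 1)^2 * (3 * real m + 4) / (real m + 1)^2 \<le> 16 * (3 * real m + 1)"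
      by (simp add: divide_le_eq)
    then show ?thesis by (intro mult_right_mono) auto
  qed
  also have "\<dots> \<le> 16 * 16^m"
    using Suc.IH unfolding c_def by (simp add: algebra_simps)
  finally show ?case by simp
qed

lemma central_binomial_le: "real ((2*m) choose m) / 4^m \<le> 1 / sqrt (3 * real m + 1)"
proof -
  have "(real ((2*m) choose m) * sqrt (3 * real m + 1))^2 = real ((2*m) choose m)^2 * (3 * real m + 1)"
    by (simp add: power_mult_distrib)
  also have "\<dots> \<le> (4^m)^2"
  proof -
    have "((4::real)^m)^2 = 16^m"
      by (simp flip: power_mult add: mult.commute[of m]) (simp add: power_mult)
    then show ?thesis using central_binomial_sq_le[of m] by simp
  qed
  finally have "real ((2*m) choose m) * sqrt (3 * real m + 1) \<le> 4^m"
    by (rule power2_le_imp_le) simp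
  then show ?thesis by (simp add: field_simps)
qed

definition expected_closed_sets :: "nat \<Rightarrow> nat \<Rightarrow> real" where
  "expected_closed_sets N k = real (N choose k) * (real k / real N)^(2*k)"

lemma expected_closed_sets_nonneg: "expected_closed_sets N k \<ge> 0"
  unfolding expected_closed_sets_def by simp

lemma expected_closed_sets_small:
  assumes "k \<ge> 1" "10 * k \<le> 3 * N"
  shows "expected_closed_sets N k \<le> 3 * real k / real N * (9/10)^(k - 1)"
proof -
  have N: "real N > 0" and k: "real k > 0" using assms by auto
  have "real (N choose k) * fact k \<le> real N ^ k"
    using binomial_fact_pow[of N k] by (metis of_nat_fact of_nat_le_iff of_nat_mult of_nat_power)
  then have "real (N choose k) \<le> real N ^ k / fact k"
    by (simp add: field_simps)
  also have "\<dots> \<le> real N ^ k / (real k / 3)^k"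
    using fact_ge_pow_third[of k] k by (intro divide_left_mono) auto
  finally have "expected_closed_sets N k \<le> real N ^ k / (real k / 3)^k * (real k / real N)^(2*k)"
    unfolding expected_closed_sets_def by (intro mult_right_mono) auto
  also have "\<dots> = (3 * real k / real N)^k"
    using N k by (simp add: power_mult power2_eq_square power_divide power_mult_distrib field_simps)
  also have "\<dots> = 3 * real k / real N * (3 * real k / real N)^(k - 1)"
    using assms(1) by (metis Suc_diff_le diff_Suc_1 power_Suc)
  also have "\<dots> \<le> 3 * real k / real N * (9/10)^(k - 1)"
    using assms N by (intro mult_left_mono power_mono) (auto simp: field_simps)
  finally show ?thesis .
qed

lemma expected_closed_sets_Suc:
  assumes "k \<le> N" "N > 0"
  shows "real N ^ 2 * real k ^ (2*k) * expected_closed_sets N (Suc k)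
       = (real N - real k) * (real k + 1) * (real k + 1)^(2*k) * expected_closed_sets N k"
proof -
  have "real (Suc k * (N choose Suc k)) = real ((N - k) * (N choose k))"
    using binomial_absorption[of k N] binomial_absorb_comp[of N k] by simp
  then have absorb: "(real k + 1) * real (N choose Suc k) = (real N - real k) * real (N choose k)"
    using assms(1) by (simp add: of_nat_diff algebra_simps)
  \<comment> \<open>An abstract field identity, so that the simplifier does not expand the powers.\<close>
  have field: "N' ^ 2 * A * (c' * ((K + 1) / N')^2 * (B / M)) = (N' - K) * (K + 1) * B * (c * (A / M))"
    if "N' \<noteq> 0" "M \<noteq> 0" "(K + 1) * c' = (N' - K) * c" for N' K A B M c c' :: real
  proof -
    have "N' ^ 2 * A * (c' * ((K + 1) / N')^2 * (B / M)) = A * B / M * (K + 1) * ((K + 1) * c')"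
      using that(1,2) by (simp add: field_simps power2_eq_square)
    then show ?thesis
      unfolding that(3) by (simp add: field_simps)
  qed
  have "expected_closed_sets N (Suc k)
      = real (N choose Suc k) * ((real k + 1) / real N)^2 * ((real k + 1)^(2*k) / real N ^ (2*k))"
    unfolding expected_closed_sets_def
    by (simp add: mult_Suc_right power_add power_divide power2_eq_square add.commute mult.assoc)
  moreover have "expected_closed_sets N k = real (N choose k) * (real k ^ (2*k) / real N ^ (2*k))"
    unfolding expected_closed_sets_def by (simp add: power_divide)
  ultimately show ?thesis
    using assms(2) by (simp only:) (rule field[OF _ _ absorb]; simp)
qed

lemma expected_closed_sets_growth:
  assumes "2 \<le> k" "3 * N \<le> 10 * k" "2 * (k + 1) \<le> N"
  shows "106/100 * expected_closed_sets N k \<le> expected_closed_sets N (Suc k)"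
proof -
  have N: "real N > 0" and k: "real k > 0" and kN: "k \<le> N" using assms by auto
  have "21/100 * real N ^ 2 \<le> (real N - real k) * real k"
  proof -
    have "3 * N \<le> 10 * k" "2 * k \<le> N"
      using assms(2,3) by simp_all
    then have "3 * real N \<le> 10 * real k" "2 * real k \<le> real N"
      by (metis of_nat_le_iff of_nat_mult of_nat_numeral)+
    then have "0 \<le> (10 * real k - 3 * real N) * (7 * real N - 10 * real k)"
      by (intro mult_nonneg_nonneg) linarith+
    then show ?thesis by (simp add: algebra_simps power2_eq_square)
  qed
  moreover have "(real N - real k) * real k \<le> (real N - real k) * (real k + 1)"
    using kN by (intro mult_left_mono) auto
  ultimately have "106/100 * real N ^ 2 \<le> 81/16 * ((real N - real k) * (real k + 1))"
    using zero_le_power2[of "real N"] by linarith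
  then have "106/100 * real N ^ 2 * real k ^ (2*k) \<le> 81/16 * ((real N - real k) * (real k + 1)) * real k ^ (2*k)"
    by (intro mult_right_mono) auto
  also have "\<dots> = (real N - real k) * (real k + 1) * (81/16 * real k ^ (2*k))"
    by simp
  also have "\<dots> \<le> (real N - real k) * (real k + 1) * (real k + 1)^(2*k)"
    using kN succ_pow_double_ge[OF assms(1)] by (intro mult_left_mono) auto
  finally have "106/100 * real N ^ 2 * real k ^ (2*k) \<le> (real N - real k) * (real k + 1) * (real k + 1)^(2*k)" .
  from mult_right_mono[OF this expected_closed_sets_nonneg[of N k]]
  have "real N ^ 2 * real k ^ (2*k) * (106/100 * expected_closed_sets N k)
      \<le> (real N - real k) * (real k + 1) * (real k + 1)^(2*k) * expected_closed_sets N k"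
    by (simp only: ac_simps)
  also have "\<dots> = real N ^ 2 * real k ^ (2*k) * expected_closed_sets N (Suc k)"
    using expected_closed_sets_Suc[OF kN] N by simp
  finally show ?thesis
    using N k by (simp add: mult_le_cancel_left_pos)
qed

lemma expected_closed_sets_large:
  assumes "2 \<le> k" "3 * N \<le> 10 * k" "k \<le> N div 2"
  shows "expected_closed_sets N k \<le> expected_closed_sets N (N div 2) * (100/106)^(N div 2 - k)"
  using assms
proof (induction "N div 2 - k" arbitrary: k)
  case 0
  then show ?case by simp
next
  case (Suc d)
  have "106/100 * expected_closed_sets N k \<le> expected_closed_sets N (Suc k)"
    using Suc.prems Suc.hyps(2) by (intro expected_closed_sets_growth) auto
  also have "\<dots> \<le> expected_closed_sets N (N div 2) * (100/106)^d"
  proof -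
    have d: "d = N div 2 - Suc k" "Suc k \<le> N div 2"
      using Suc.hyps(2) by arith+
    show ?thesis
      using Suc.hyps(1)[OF d(1)] Suc.prems d(2) by (simp add: d(1)[symmetric])
  qed
  finally show ?case
    using Suc.hyps(2)[symmetric] by simp
qed

lemma expected_closed_sets_half:
  assumes "N \<ge> 1"
  shows "expected_closed_sets N (N div 2) \<le> 2 / sqrt (real N)"
proof -
  define m where "m = N div 2"
  have central: "real ((2*m) choose m) / 4^m \<le> 1 / sqrt (3 * real m + 1)"
    by (rule central_binomial_le)
  have "N = 2 * m \<or> N = Suc (2 * m)"
    unfolding m_def by presburger
  then consider "N = 2 * m" | "N = Suc (2 * m)"
    by blast
  then have "expected_closed_sets N m \<le> 2 * (real ((2*m) choose m) / 4^m)"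
  proof cases
    case 1
    then have "expected_closed_sets N m = real ((2*m) choose m) / 4^m"
      using assms unfolding expected_closed_sets_def
      by (simp add: power_mult power_divide field_simps power2_eq_square power_mult_distrib[symmetric])
    moreover have "real ((2*m) choose m) / 4^m \<ge> 0"
      by simp
    ultimately show ?thesis by linarith
  next
    case 2
    have "Suc m * (Suc (2*m) choose m) = Suc (2*m) * ((2*m) choose m)"
      using Suc_times_binomial[of m "2*m"] binomial_symmetric[of "Suc m" "Suc (2*m)"] by simp
    then have "real (Suc m) * real (Suc (2*m) choose m) = real (Suc (2*m)) * real ((2*m) choose m)"
      by (metis of_nat_mult)
    also have "\<dots> \<le> real (Suc m) * (2 * real ((2*m) choose m))"
      by simp
    finally have "real (Suc (2*m) choose m) \<le> 2 * real ((2*m) choose m)"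
      by (simp add: mult_le_cancel_left)
    moreover have "(real m / real (Suc (2*m)))^(2*m) \<le> (1/2)^(2*m)"
      by (intro power_mono) (auto simp: field_simps)
    ultimately have "expected_closed_sets N m \<le> 2 * real ((2*m) choose m) * (1/2)^(2*m)"
      unfolding expected_closed_sets_def 2 by (intro mult_mono) auto
    then show ?thesis
      by (simp add: power_mult power_divide)
  qed
  also have "\<dots> \<le> 2 / sqrt (3 * real m + 1)"
    using central by simp
  also have "\<dots> \<le> 2 / sqrt (real N)"
    unfolding m_def using assms by (intro divide_left_mono) auto
  finally show ?thesis
    unfolding m_def .
qed

lemma sum_index_times_power_le:
  fixes q :: real
  assumes "0 \<le> q" "q < 1"
  shows "(\<Sum>k=1..n. real k * q^(k - 1)) \<le> 1 / (1 - q)^2"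
proof -
  have closed_form: "(\<Sum>k<n. real (k + 1) * q^k) * (1 - q)^2 = 1 - real (n + 1) * q^n + real n * q^(n + 1)" for n
    by (induction n) (simp_all add: algebra_simps power2_eq_square)
  have "real n * q^(n + 1) = (real n * q) * q^n"
    by simp
  also have "\<dots> \<le> real (n + 1) * q^n"
    using assms mult_left_le[of q "real n"] by (intro mult_right_mono) auto
  finally have "(\<Sum>k<n. real (k + 1) * q^k) * (1 - q)^2 \<le> 1"
    using closed_form[of n] by simp
  then have "(\<Sum>k<n. real (k + 1) * q^k) \<le> 1 / (1 - q)^2"
    using assms by (simp add: field_simps)
  then show ?thesis
    using sum.atLeast1_atMost_eq[of "\<lambda>k. real k * q^(k - 1)" n] by simp
qed

lemma sum_reversed_power_le:
  fixes q :: real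
  assumes "0 \<le> q" "q < 1"
  shows "(\<Sum>k=1..n. q^(n - k)) \<le> 1 / (1 - q)"
proof -
  have "(\<Sum>k=1..n. q^(n - k)) = (\<Sum>k<n. q^k)"
    using sum.atLeast1_atMost_eq[of "\<lambda>k. q^(n - k)" n] sum.nat_diff_reindex[of "\<lambda>k. q^k" n] by simp
  also have "\<dots> \<le> 1 / (1 - q)"
    using assms by (simp add: sum_gp_strict divide_right_mono)
  finally show ?thesis .
qed

lemma expected_closed_sets_le:
  assumes "N \<ge> 7" "k \<in> {1..N div 2}"
  shows "expected_closed_sets N k
    \<le> 3 * real k / real N * (9/10)^(k - 1) + expected_closed_sets N (N div 2) * (100/106)^(N div 2 - k)"
proof (cases "10 * k \<le> 3 * N")
  case True
  then have "expected_closed_sets N k \<le> 3 * real k / real N * (9/10)^(k - 1)"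
    using assms by (intro expected_closed_sets_small) auto
  moreover have "expected_closed_sets N (N div 2) * (100/106)^(N div 2 - k) \<ge> 0"
    using expected_closed_sets_nonneg by simp
  ultimately show ?thesis by linarith
next
  case False
  then have "expected_closed_sets N k \<le> expected_closed_sets N (N div 2) * (100/106)^(N div 2 - k)"
    using assms by (intro expected_closed_sets_large) auto
  moreover have "3 * real k / real N * (9/10)^(k - 1) \<ge> 0"
    by simp
  ultimately show ?thesis by linarith
qed

lemma sum_expected_closed_sets_le:
  assumes "N \<ge> 7"
  shows "(\<Sum>k\<in>{1..N div 2}. expected_closed_sets N k) \<le> 300 / real N + 36 / sqrt (real N)"
proof -
  define M where "M = N div 2"
  define r :: real where "r = 100/106"
  have N: "real N > 0" using assms by simp
  have "(\<Sum>k=1..M. 3 * real k / real N * (9/10)^(k - 1)) = 3 / real N * (\<Sum>k=1..M. real k * (9/10)^(k - 1))"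
    by (simp add: sum_distrib_left mult.assoc)
  also have "\<dots> \<le> 3 / real N * 100"
    using N sum_index_times_power_le[of "9/10" M] by (intro mult_left_mono) (auto simp: power2_eq_square)
  finally have small: "(\<Sum>k=1..M. 3 * real k / real N * (9/10)^(k - 1)) \<le> 300 / real N"
    by simp
  have "(\<Sum>k=1..M. expected_closed_sets N M * r^(M - k)) = expected_closed_sets N M * (\<Sum>k=1..M. r^(M - k))"
    by (simp add: sum_distrib_left)
  also have "\<dots> \<le> 2 / sqrt (real N) * (106/6)"
    using expected_closed_sets_half[of N] sum_reversed_power_le[of r M] expected_closed_sets_nonneg[of N M] assms
    unfolding M_def r_def by (intro mult_mono) (auto intro: sum_nonneg)
  also have "\<dots> \<le> 36 / sqrt (real N)"
    using N by (simp add: field_simps)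
  finally have large: "(\<Sum>k=1..M. expected_closed_sets N M * r^(M - k)) \<le> 36 / sqrt (real N)" .
  have "(\<Sum>k=1..M. expected_closed_sets N k)
      \<le> (\<Sum>k=1..M. 3 * real k / real N * (9/10)^(k - 1)) + (\<Sum>k=1..M. expected_closed_sets N M * r^(M - k))"
    unfolding sum.distrib[symmetric] M_def r_def by (rule sum_mono) (rule expected_closed_sets_le[OF assms])
  then show ?thesis
    using small large unfolding M_def by linarith
qed

definition successor_closed :: "(nat \<Rightarrow> nat \<times> nat) \<Rightarrow> nat set \<Rightarrow> bool" where
  "successor_closed U S \<longleftrightarrow> (\<forall>i\<in>S. fst (U i) \<in> S \<and> snd (U i) \<in> S)"

definition small_closed_set_event :: "nat \<Rightarrow> (nat \<Rightarrow> nat \<times> nat) set" where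
  "small_closed_set_event N =
     {U. \<exists>S. S \<subseteq> {..<N} \<and> S \<noteq> {} \<and> 2 * card S \<le> N \<and> successor_closed U S}"

lemma finite_wcm_space: "finite (wcm_space N)"
  unfolding wcm_space_def by (intro finite_PiE) auto

lemma wcm_space_not_empty: "wcm_space N \<noteq> {}"
  unfolding wcm_space_def by (auto simp: PiE_eq_empty_iff)

lemma card_wcm_space: "card (wcm_space N) = (N * N)^N"
  unfolding wcm_space_def by (simp add: card_PiE card_cartesian_product)

lemma set_pmf_WCM: "set_pmf (WCM N) = wcm_space N"
  unfolding WCM_def using finite_wcm_space wcm_space_not_empty by simp

lemma measure_WCM: "measure_pmf.prob (WCM N) A = card (wcm_space N \<inter> A) / card (wcm_space N)"
  unfolding WCM_def by (rule measure_pmf_of_set[OF wcm_space_not_empty finite_wcm_space])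

lemma prob_successor_closed:
  assumes S: "S \<subseteq> {..<N}" and N: "N > 0"
  shows "measure_pmf.prob (WCM N) {U. successor_closed U S} = (real (card S) / real N)^(2 * card S)"
proof -
  have fin: "finite S" using S finite_subset by blast
  have card_S: "card S \<le> N" using S by (metis card_lessThan card_mono finite_lessThan)
  have "wcm_space N \<inter> {U. successor_closed U S}
      = Pi\<^sub>E {..<N} (\<lambda>i. if i \<in> S then S \<times> S else {..<N} \<times> {..<N})"
    using S unfolding wcm_space_def successor_closed_def
    by (auto simp: PiE_iff mem_Times_iff split: if_splits) (metis lessThan_iff subsetD prod.collapse)+
  then have "card (wcm_space N \<inter> {U. successor_closed U S})
      = (\<Prod>i<N. if i \<in> S then card S * card S else N * N)"
    by (simp add: card_PiE card_cartesian_product if_distrib cong: if_cong)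
  also have "\<dots> = (card S * card S)^card S * (N * N)^(N - card S)"
  proof -
    have "{..<N} \<inter> S = S" using S by auto
    moreover have "card ({..<N} \<inter> - S) = N - card S"
      using S fin by (simp add: Diff_eq[symmetric] card_Diff_subset)
    ultimately show ?thesis
      by (simp add: prod.If_cases)
  qed
  finally have count: "card (wcm_space N \<inter> {U. successor_closed U S})
      = (card S * card S)^card S * (N * N)^(N - card S)" .
  have "real ((N * N)^N) = real ((N * N)^(N - card S)) * real ((N * N)^card S)"
    using card_S by (simp flip: power_add of_nat_mult of_nat_power)
  then have "measure_pmf.prob (WCM N) {U. successor_closed U S}
      = real ((card S * card S)^card S) / real ((N * N)^card S)"
    unfolding measure_WCM count card_wcm_space using N by (simp add: field_simps)
  also have "\<dots> = (real (card S) / real N)^(2 * card S)"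
    by (simp add: power_mult power_divide power2_eq_square mult.commute power_mult_distrib)
  finally show ?thesis .
qed

lemma sum_small_subsets_eq_expected_closed_sets:
  "(\<Sum>S | S \<subseteq> {..<N} \<and> S \<noteq> {} \<and> 2 * card S \<le> N. (real (card S) / real N)^(2 * card S))
     = (\<Sum>k\<in>{1..N div 2}. expected_closed_sets N k)"
proof -
  let ?SS = "{S. S \<subseteq> {..<N} \<and> S \<noteq> {} \<and> 2 * card S \<le> N}"
  have fin: "finite ?SS"
    by (rule finite_subset[of _ "Pow {..<N}"]) auto
  have "card ` ?SS \<subseteq> {1..N div 2}"
    by (auto simp: card_gt_0_iff Suc_le_eq dest: finite_subset[OF _ finite_lessThan])
  then have "(\<Sum>S\<in>?SS. (real (card S) / real N)^(2 * card S))
      = (\<Sum>k\<in>{1..N div 2}. \<Sum>S | S \<in> ?SS \<and> card S = k. (real (card S) / real N)^(2 * card S))"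
    by (intro sum.group[symmetric] fin) auto
  also have "\<dots> = (\<Sum>k\<in>{1..N div 2}. expected_closed_sets N k)"
  proof (intro sum.cong refl)
    fix k assume k: "k \<in> {1..N div 2}"
    then have "{S. S \<in> ?SS \<and> card S = k} = {S. S \<subseteq> {..<N} \<and> card S = k}"
      by auto
    then have "(\<Sum>S | S \<in> ?SS \<and> card S = k. (real (card S) / real N)^(2 * card S))
        = (\<Sum>S | S \<subseteq> {..<N} \<and> card S = k. (real k / real N)^(2 * k))"
      by (intro sum.cong) auto
    also have "\<dots> = expected_closed_sets N k"
      using n_subsets[of "{..<N}" k] by (simp add: expected_closed_sets_def)
    finally show "(\<Sum>S | S \<in> ?SS \<and> card S = k. (real (card S) / real N)^(2 * card S))
        = expected_closed_sets N k" .
  qed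
  finally show ?thesis by simp
qed

lemma prob_small_closed_set_le:
  assumes "N > 0"
  shows "measure_pmf.prob (WCM N) (small_closed_set_event N) \<le> (\<Sum>k\<in>{1..N div 2}. expected_closed_sets N k)"
proof -
  let ?SS = "{S. S \<subseteq> {..<N} \<and> S \<noteq> {} \<and> 2 * card S \<le> N}"
  have "finite ?SS"
    by (rule finite_subset[of _ "Pow {..<N}"]) auto
  moreover have "small_closed_set_event N = (\<Union>S\<in>?SS. {U. successor_closed U S})"
    unfolding small_closed_set_event_def by auto
  ultimately have "measure_pmf.prob (WCM N) (small_closed_set_event N)
      \<le> (\<Sum>S\<in>?SS. measure_pmf.prob (WCM N) {U. successor_closed U S})"
    using measure_pmf.finite_measure_subadditive_finite[of ?SS "\<lambda>S. {U. successor_closed U S}"] by simp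
  also have "\<dots> = (\<Sum>S\<in>?SS. (real (card S) / real N)^(2 * card S))"
    using assms by (intro sum.cong refl prob_successor_closed) auto
  also have "\<dots> = (\<Sum>k\<in>{1..N div 2}. expected_closed_sets N k)"
    by (rule sum_small_subsets_eq_expected_closed_sets)
  finally show ?thesis .
qed

definition left_invariant :: "nat \<Rightarrow> (nat \<Rightarrow> nat \<Rightarrow> real) \<Rightarrow> (nat \<Rightarrow> real) \<Rightarrow> bool" where
  "left_invariant N M x \<longleftrightarrow> (\<forall>j<N. (\<Sum>i<N. x i * M i j) = x j)"

lemma stationary_iff:
  "stationary N U \<pi> \<longleftrightarrow>
     (\<forall>i. \<pi> i \<ge> 0) \<and> (\<forall>i\<ge>N. \<pi> i = 0) \<and> (\<Sum>i<N. \<pi> i) = 1 \<and> left_invariant N (trans U) \<pi>"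
  unfolding stationary_def left_invariant_def by simp

lemma stationaryD:
  assumes "stationary N U \<pi>"
  shows "\<pi> i \<ge> 0" "i \<ge> N \<Longrightarrow> \<pi> i = 0" "(\<Sum>i<N. \<pi> i) = 1" "left_invariant N (trans U) \<pi>"
  using assms unfolding stationary_iff by auto

lemma left_invariant_diff_scaled:
  assumes "left_invariant N M x" "left_invariant N M y"
  shows "left_invariant N M (\<lambda>i. x i - t * y i)"
proof -
  have "(\<Sum>i<N. (x i - t * y i) * M i j) = (\<Sum>i<N. x i * M i j) - t * (\<Sum>i<N. y i * M i j)" for j
    by (simp add: algebra_simps sum_subtractf sum_distrib_left)
  then show ?thesis
    using assms unfolding left_invariant_def by simp
qed

lemma det_stochastic_matrix_minus_id:
  fixes M :: "nat \<Rightarrow> nat \<Rightarrow> real"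
  assumes N: "N > 0" and rows: "\<And>i. i < N \<Longrightarrow> (\<Sum>j<N. M i j) = 1"
  shows "det (mat N N (\<lambda>(i, j). M i j - (if i = j then 1 else 0))) = 0"
    (is "det ?A = 0")
proof -
  define one :: "real vec" where "one = vec N (\<lambda>_. 1)"
  have one: "one \<in> carrier_vec N" "one \<noteq> 0\<^sub>v N"
    using N unfolding one_def by (auto simp: vec_eq_iff)
  have "?A *\<^sub>v one = 0\<^sub>v N"
  proof (rule eq_vecI)
    fix i assume "i < dim_vec (0\<^sub>v N)"
    then have i: "i < N" by simp
    have "vec_index (?A *\<^sub>v one) i = (\<Sum>j\<in>{0..<N}. M i j - (if i = j then 1 else 0))"
      using i unfolding one_def by (simp add: scalar_prod_def)
    also have "\<dots> = (\<Sum>j<N. M i j) - (\<Sum>j\<in>{0..<N}. if i = j then 1 else 0)"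
      by (simp add: sum_subtractf lessThan_atLeast0)
    finally show "vec_index (?A *\<^sub>v one) i = vec_index (0\<^sub>v N) i"
      using rows[OF i] i by simp
  qed simp
  then show ?thesis
    using det_0_iff_vec_prod_zero[of ?A N] one by auto
qed

lemma left_invariant_nonzero_exists:
  fixes M :: "nat \<Rightarrow> nat \<Rightarrow> real"
  assumes N: "N > 0" and rows: "\<And>i. i < N \<Longrightarrow> (\<Sum>j<N. M i j) = 1"
  shows "\<exists>x. (\<exists>i<N. x i \<noteq> 0) \<and> left_invariant N M x"
proof -
  define A :: "real mat" where "A = mat N N (\<lambda>(i, j). M i j - (if i = j then 1 else 0))"
  have A: "A \<in> carrier_mat N N" unfolding A_def by simp
  have "det A = 0"
    unfolding A_def using N rows by (rule det_stochastic_matrix_minus_id)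
  then have "det (transpose_mat A) = 0"
    using det_transpose[OF A] by simp
  then obtain w where w: "w \<in> carrier_vec N" "w \<noteq> 0\<^sub>v N" "transpose_mat A *\<^sub>v w = 0\<^sub>v N"
    using det_0_iff_vec_prod_zero[of "transpose_mat A" N] A by auto
  define x where "x i = (if i < N then vec_index w i else 0)" for i
  have "\<exists>i<N. x i \<noteq> 0"
  proof (rule ccontr)
    assume "\<not> (\<exists>i<N. x i \<noteq> 0)"
    then have "w = 0\<^sub>v N"
      using w(1) unfolding x_def by (intro eq_vecI) auto
    then show False using w(2) by simp
  qed
  moreover have "(\<Sum>i<N. x i * M i j) = x j" if j: "j < N" for j
  proof -
    have "0 = vec_index (transpose_mat A *\<^sub>v w) j"
      using w(3) j by simp
    also have "\<dots> = (\<Sum>i\<in>{0..<N}. (M i j - (if i = j then 1 else 0)) * vec_index w i)"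
      using j w(1) unfolding A_def by (simp add: scalar_prod_def)
    also have "\<dots> = (\<Sum>i\<in>{0..<N}. M i j * vec_index w i) - (\<Sum>i\<in>{0..<N}. if i = j then vec_index w i else 0)"
      unfolding sum_subtractf[symmetric] by (intro sum.cong) (auto simp: algebra_simps)
    also have "\<dots> = (\<Sum>i<N. x i * M i j) - x j"
      using j unfolding x_def lessThan_atLeast0 by (simp add: mult.commute)
    finally show ?thesis by simp
  qed
  ultimately show ?thesis
    unfolding left_invariant_def by blast
qed

lemma left_invariant_abs:
  fixes M :: "nat \<Rightarrow> nat \<Rightarrow> real"
  assumes nonneg: "\<And>i j. M i j \<ge> 0" and rows: "\<And>i. i < N \<Longrightarrow> (\<Sum>j<N. M i j) = 1"
    and inv: "left_invariant N M x"
  shows "left_invariant N M (\<lambda>i. \<bar>x i\<bar>)"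
proof -
  have sub: "\<bar>x j\<bar> \<le> (\<Sum>i<N. \<bar>x i\<bar> * M i j)" if "j < N" for j
  proof -
    have "\<bar>x j\<bar> = \<bar>\<Sum>i<N. x i * M i j\<bar>"
      using inv that unfolding left_invariant_def by simp
    also have "\<dots> \<le> (\<Sum>i<N. \<bar>x i * M i j\<bar>)"
      by (rule sum_abs)
    also have "\<dots> = (\<Sum>i<N. \<bar>x i\<bar> * M i j)"
      using nonneg by (simp add: abs_mult)
    finally show ?thesis .
  qed
  \<comment> \<open>Equality holds in each row because the total mass is preserved.\<close>
  have "(\<Sum>j<N. \<Sum>i<N. \<bar>x i\<bar> * M i j) = (\<Sum>i<N. \<bar>x i\<bar> * (\<Sum>j<N. M i j))"
    by (subst sum.swap) (simp add: sum_distrib_left)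
  also have "\<dots> = (\<Sum>j<N. \<bar>x j\<bar>)"
    using rows by simp
  finally have "(\<Sum>j<N. (\<Sum>i<N. \<bar>x i\<bar> * M i j) - \<bar>x j\<bar>) = 0"
    by (simp add: sum_subtractf)
  then show ?thesis
    using sub sum_nonneg_eq_0_iff[of "{..<N}" "\<lambda>j. (\<Sum>i<N. \<bar>x i\<bar> * M i j) - \<bar>x j\<bar>"]
    unfolding left_invariant_def by simp
qed

lemma stochastic_matrix_stationary_exists:
  fixes M :: "nat \<Rightarrow> nat \<Rightarrow> real"
  assumes N: "N > 0" and nonneg: "\<And>i j. M i j \<ge> 0" and rows: "\<And>i. i < N \<Longrightarrow> (\<Sum>j<N. M i j) = 1"
  shows "\<exists>\<pi>. (\<forall>i. \<pi> i \<ge> 0) \<and> (\<forall>i\<ge>N. \<pi> i = 0) \<and> (\<Sum>i<N. \<pi> i) = 1 \<and> left_invariant N M \<pi>"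
proof -
  have "\<exists>x. (\<exists>i<N. x i \<noteq> 0) \<and> left_invariant N M x"
    using N rows by (rule left_invariant_nonzero_exists)
  then obtain x where x: "\<exists>i<N. x i \<noteq> 0" "left_invariant N M x"
    by blast
  define W where "W = (\<Sum>i<N. \<bar>x i\<bar>)"
  have "W > 0"
    using x(1) unfolding W_def by (auto intro: sum_pos2)
  define \<pi> where "\<pi> i = (if i < N then \<bar>x i\<bar> / W else 0)" for i
  have "(\<Sum>i<N. \<pi> i) = 1"
    using \<open>W > 0\<close> unfolding \<pi>_def W_def by (simp add: sum_divide_distrib[symmetric])
  moreover have "left_invariant N M \<pi>"
    using left_invariant_abs[OF nonneg rows x(2)] unfolding left_invariant_def \<pi>_def
    by (simp add: sum_divide_distrib[symmetric])
  moreover have "\<forall>i. \<pi> i \<ge> 0" "\<forall>i\<ge>N. \<pi> i = 0"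
    using \<open>W > 0\<close> by (auto simp: \<pi>_def)
  ultimately show ?thesis
    by blast
qed

lemma wcm_space_successors:
  assumes "U \<in> wcm_space N" "i < N"
  shows "fst (U i) < N" "snd (U i) < N"
  using assms unfolding wcm_space_def by (auto simp: PiE_iff mem_Times_iff)

lemma sum_trans:
  assumes "finite A"
  shows "(\<Sum>j\<in>A. trans U i j) = (if fst (U i) \<in> A then 1/2 else 0) + (if snd (U i) \<in> A then 1/2 else 0)"
  unfolding trans_def sum.distrib using assms by (simp add: sum.delta')

lemma trans_nonneg: "trans U i j \<ge> 0"
  unfolding trans_def by simp

lemma trans_row_sum:
  assumes "U \<in> wcm_space N" "i < N"
  shows "(\<Sum>j<N. trans U i j) = 1"
  using wcm_space_successors[OF assms] by (simp add: sum_trans)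

lemma reach_successors:
  assumes "U \<in> wcm_space N" "i < N"
  shows "reach N U i (fst (U i))" "reach N U i (snd (U i))"
  using wcm_space_successors[OF assms] assms(2)
  unfolding reach_def wcm_edges_def by (auto intro: r_into_rtrancl)

lemma reach_trans: "reach N U i j \<Longrightarrow> reach N U j k \<Longrightarrow> reach N U i k"
  unfolding reach_def by (rule rtrancl_trans)

lemma reach_less:
  assumes "reach N U i j" "i < N"
  shows "j < N"
  using assms unfolding reach_def by (induction rule: rtrancl_induct) (auto simp: wcm_edges_def)

lemma reach_stays_in_closed:
  assumes "successor_closed U S" "reach N U i j" "i \<in> S"
  shows "j \<in> S"
  using assms(2,3) unfolding reach_def
  by (induction rule: rtrancl_induct) (use assms(1) in \<open>auto simp: successor_closed_def wcm_edges_def\<close>)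

lemma successor_closed_reachable:
  assumes "U \<in> wcm_space N" "i < N"
  shows "successor_closed U {j. reach N U i j}"
  unfolding successor_closed_def
  using reach_trans reach_successors[OF assms(1)] reach_less[OF _ assms(2)] by blast

lemma invariant_support_closed:
  assumes "U \<in> wcm_space N" and nonneg: "\<And>i. \<rho> i \<ge> 0" and inv: "left_invariant N (trans U) \<rho>"
  shows "successor_closed U {i. i < N \<and> \<rho> i > 0}"
  unfolding successor_closed_def
proof (intro ballI)
  fix i assume "i \<in> {i. i < N \<and> \<rho> i > 0}"
  then have i: "i < N" "\<rho> i > 0" by auto
  have "\<rho> j > 0" if "j < N" "trans U i j \<ge> 1/2" for j
  proof -
    have "0 < \<rho> i * trans U i j"
      using i that by simp
    also have "\<dots> \<le> (\<Sum>k<N. \<rho> k * trans U k j)"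
      using i nonneg trans_nonneg by (intro member_le_sum) auto
    also have "\<dots> = \<rho> j"
      using inv that unfolding left_invariant_def by simp
    finally show ?thesis .
  qed
  moreover have "trans U i (fst (U i)) \<ge> 1/2" "trans U i (snd (U i)) \<ge> 1/2"
    unfolding trans_def by auto
  ultimately show "fst (U i) \<in> {i. i < N \<and> \<rho> i > 0} \<and> snd (U i) \<in> {i. i < N \<and> \<rho> i > 0}"
    using wcm_space_successors[OF assms(1) i(1)] by auto
qed

lemma stationary_support_outside_closed:
  assumes U: "U \<in> wcm_space N" and C: "C \<subseteq> {..<N}" "successor_closed U C"
    and st: "stationary N U \<pi>"
  shows "successor_closed U {i. i < N \<and> i \<notin> C \<and> \<pi> i > 0}"
proof -
  define T where "T = {..<N} - C"
  define s where "s i = (\<Sum>j\<in>T. trans U i j)" for i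
  note nonneg = stationaryD(1)[OF st] and inv = stationaryD(4)[OF st]
  have s_eq: "s i = (if fst (U i) \<in> T then 1/2 else 0) + (if snd (U i) \<in> T then 1/2 else 0)" for i
    unfolding s_def T_def by (simp add: sum_trans)
  have s_C: "s i = 0" if "i \<in> C" for i
    using C(2) that unfolding s_eq T_def successor_closed_def by auto
  \<comment> \<open>Since C is closed, T receives mass only from T; so every vertex of T carrying mass
    sends all of it into T.\<close>
  have "(\<Sum>j\<in>T. \<pi> j) = (\<Sum>j\<in>T. \<Sum>i<N. \<pi> i * trans U i j)"
    using inv unfolding left_invariant_def T_def by (intro sum.cong) auto
  also have "\<dots> = (\<Sum>i<N. \<pi> i * s i)"
    unfolding s_def by (subst sum.swap) (simp add: sum_distrib_left)
  also have "\<dots> = (\<Sum>i\<in>T. \<pi> i * s i) + (\<Sum>i\<in>C. \<pi> i * s i)"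
    unfolding T_def using C(1) by (intro sum.subset_diff) auto
  also have "(\<Sum>i\<in>C. \<pi> i * s i) = 0"
    using s_C by simp
  finally have "(\<Sum>i\<in>T. \<pi> i * (1 - s i)) = 0"
    by (simp add: algebra_simps sum_subtractf)
  moreover have "\<forall>i\<in>T. 0 \<le> \<pi> i * (1 - s i)"
    using nonneg unfolding s_eq by simp
  ultimately have "\<forall>i\<in>T. \<pi> i * (1 - s i) = 0"
    using sum_nonneg_eq_0_iff[of T "\<lambda>i. \<pi> i * (1 - s i)"] unfolding T_def by blast
  then have "fst (U i) \<in> T \<and> snd (U i) \<in> T" if "i \<in> T" "\<pi> i > 0" for i
    using that unfolding s_eq by (auto split: if_splits)
  moreover have "successor_closed U {i. i < N \<and> \<pi> i > 0}"
    using invariant_support_closed[OF U nonneg inv] .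
  ultimately show ?thesis
    unfolding successor_closed_def T_def by auto
qed

definition least_closed_set :: "nat \<Rightarrow> (nat \<Rightarrow> nat \<times> nat) \<Rightarrow> nat set \<Rightarrow> bool" where
  "least_closed_set N U C \<longleftrightarrow> C \<subseteq> {..<N} \<and> C \<noteq> {} \<and> successor_closed U C \<and>
     (\<forall>S. S \<subseteq> {..<N} \<and> S \<noteq> {} \<and> successor_closed U S \<longrightarrow> C \<subseteq> S)"

lemma least_closed_set_exists:
  assumes U: "U \<in> wcm_space N" and N: "N > 0"
    and large: "\<And>S. S \<subseteq> {..<N} \<Longrightarrow> S \<noteq> {} \<Longrightarrow> successor_closed U S \<Longrightarrow> N < 2 * card S"
  shows "\<exists>C. least_closed_set N U C"
proof -
  let ?closed = "\<lambda>S. S \<subseteq> {..<N} \<and> S \<noteq> {} \<and> successor_closed U S"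
  have "?closed {..<N}"
    using N wcm_space_successors[OF U] unfolding successor_closed_def by auto
  then obtain C where C: "?closed C" and min: "\<And>S. ?closed S \<Longrightarrow> card C \<le> card S"
    using ex_has_least_nat[of ?closed "{..<N}" card] by blast
  \<comment> \<open>Two closed sets of more than N/2 vertices meet, and their intersection is again closed.\<close>
  have least: "C \<subseteq> S" if S: "?closed S" for S
  proof -
    have fin: "finite S" "finite C"
      using S C finite_subset[OF _ finite_lessThan] by blast+
    have "S \<inter> C \<noteq> {}"
    proof
      assume "S \<inter> C = {}"
      then have "card S + card C = card (S \<union> C)"
        using card_Un_disjoint[OF fin] by simp
      also have "\<dots> \<le> N"
        using S C card_mono[OF finite_lessThan, of "S \<union> C" N] by simp
      finally show False
        using large[of S] large[of C] S C by linarith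
    qed
    moreover have "successor_closed U (S \<inter> C)"
      using S C unfolding successor_closed_def by auto
    ultimately have "card C \<le> card (S \<inter> C)"
      using S min[of "S \<inter> C"] by auto
    then have "S \<inter> C = C"
      using card_seteq[OF fin(2), of "S \<inter> C"] by blast
    then show ?thesis by blast
  qed
  show ?thesis
    unfolding least_closed_set_def using C least by (intro exI[of _ C]) auto
qed

lemma stationary_eq_if_proportional:
  assumes st1: "stationary N U \<pi>" and st2: "stationary N U \<sigma>" and proportional: "\<And>i. i < N \<Longrightarrow> \<pi> i = t * \<sigma> i"
  shows "\<pi> = \<sigma>"
proof
  fix i
  have "(\<Sum>i<N. \<pi> i) = t * (\<Sum>i<N. \<sigma> i)"
    using proportional by (simp add: sum_distrib_left)
  then have "t = 1"
    using stationaryD(3)[OF st1] stationaryD(3)[OF st2] by simp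
  then show "\<pi> i = \<sigma> i"
    using proportional[of i] stationaryD(2)[OF st1, of i] stationaryD(2)[OF st2, of i] by (cases "i < N") auto
qed

context
  fixes N U C
  assumes U: "U \<in> wcm_space N" and C: "least_closed_set N U C"
begin

lemma least_closed_setD:
  shows "C \<subseteq> {..<N}" "C \<noteq> {}" "successor_closed U C"
    and "S \<subseteq> {..<N} \<Longrightarrow> S \<noteq> {} \<Longrightarrow> successor_closed U S \<Longrightarrow> C \<subseteq> S"
  using C unfolding least_closed_set_def by auto

lemma least_closed_set_disjoint_closed:
  assumes "S \<subseteq> {..<N}" "successor_closed U S" "S \<inter> C = {}"
  shows "S = {}"
proof (rule ccontr)
  assume "S \<noteq> {}"
  then have "C \<subseteq> S"
    using least_closed_setD(4)[OF assms(1) _ assms(2)] by blast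
  then show False
    using least_closed_setD(2) assms(3) by blast
qed

lemma least_closed_set_reached:
  assumes "i < N" "c \<in> C"
  shows "reach N U i c"
proof -
  have "{j. reach N U i j} \<subseteq> {..<N}"
    using reach_less assms(1) by auto
  moreover have "{j. reach N U i j} \<noteq> {}"
    using rtrancl.rtrancl_refl unfolding reach_def by blast
  ultimately have "C \<subseteq> {j. reach N U i j}"
    using least_closed_setD(4) successor_closed_reachable[OF U assms(1)] by blast
  then show ?thesis
    using assms(2) by blast
qed

lemma least_closed_set_contains_scc:
  assumes "is_scc N U D" "x \<in> D" "x \<in> C"
  shows "D \<subseteq> C"
  using assms reach_stays_in_closed[OF least_closed_setD(3)] unfolding is_scc_def by blast

lemma least_closed_set_is_scc: "is_scc N U C"
  unfolding is_scc_def
proof (intro conjI allI impI)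
  show "C \<noteq> {}" "C \<subseteq> {..<N}"
    using least_closed_setD by auto
  then show "\<forall>i\<in>C. \<forall>j\<in>C. reach N U i j \<and> reach N U j i"
    using least_closed_set_reached by blast
  fix D assume D: "D \<subseteq> {..<N} \<and> C \<subseteq> D \<and> (\<forall>i\<in>D. \<forall>j\<in>D. reach N U i j \<and> reach N U j i)"
  obtain c where "c \<in> C"
    using \<open>C \<noteq> {}\<close> by blast
  then have "D \<subseteq> C"
    using D reach_stays_in_closed[OF least_closed_setD(3)] by blast
  then show "D = C"
    using D by blast
qed

lemma least_closed_set_largest_scc:
  assumes "N < 2 * card C"
  shows "largest_scc N U C"
proof -
  have "card D < card C" if D: "is_scc N U D" "D \<noteq> C" for D
  proof -
    have "D \<inter> C = {}"
    proof (rule ccontr)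
      assume "D \<inter> C \<noteq> {}"
      then have "D \<subseteq> C"
        using D(1) least_closed_set_contains_scc by blast
      moreover have "\<forall>i\<in>C. \<forall>j\<in>C. reach N U i j \<and> reach N U j i"
        using least_closed_set_is_scc unfolding is_scc_def by blast
      ultimately have "C = D"
        using D(1) least_closed_setD(1) unfolding is_scc_def by blast
      then show False
        using D(2) by simp
    qed
    moreover have "D \<subseteq> {..<N}"
      using D(1) unfolding is_scc_def by blast
    ultimately have "card D + card C = card (D \<union> C)"
      using least_closed_setD(1) by (intro card_Un_disjoint[symmetric]) (auto intro: finite_subset)
    also have "\<dots> \<le> N"
      using \<open>D \<subseteq> {..<N}\<close> least_closed_setD(1) card_mono[OF finite_lessThan, of "D \<union> C" N] by simp
    finally show ?thesis
      using assms by linarith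
  qed
  then show ?thesis
    unfolding largest_scc_def using least_closed_set_is_scc by blast
qed

lemma stationary_vanishes_outside:
  assumes st: "stationary N U \<pi>" and "i \<notin> C"
  shows "\<pi> i = 0"
proof (cases "i < N")
  case True
  let ?Z = "{i. i < N \<and> i \<notin> C \<and> \<pi> i > 0}"
  have "successor_closed U ?Z"
    using stationary_support_outside_closed[OF U least_closed_setD(1,3) st] .
  then have "?Z = {}"
    using least_closed_set_disjoint_closed[of ?Z] by auto
  then show ?thesis
    using True assms(2) stationaryD(1)[OF st, of i] by fastforce
next
  case False
  then show ?thesis
    using stationaryD(2)[OF st] by simp
qed

lemma invariant_positive_on_least_closed_set:
  assumes nonneg: "\<And>i. \<rho> i \<ge> 0" and inv: "left_invariant N (trans U) \<rho>"
    and pos: "\<exists>i<N. \<rho> i > 0" and "c \<in> C"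
  shows "\<rho> c > 0"
proof -
  have "C \<subseteq> {i. i < N \<and> \<rho> i > 0}"
    using least_closed_setD(4)[of "{i. i < N \<and> \<rho> i > 0}"] pos invariant_support_closed[OF U nonneg inv]
    by auto
  then show ?thesis
    using \<open>c \<in> C\<close> by blast
qed

lemma stationary_positive:
  assumes st: "stationary N U \<pi>" and "c \<in> C"
  shows "\<pi> c > 0"
proof (rule invariant_positive_on_least_closed_set[where \<rho> = \<pi>])
  show "\<And>i. \<pi> i \<ge> 0" "left_invariant N (trans U) \<pi>"
    using stationaryD[OF st] by auto
  show "\<exists>i<N. \<pi> i > 0"
  proof (rule ccontr)
    assume "\<not> (\<exists>i<N. \<pi> i > 0)"
    then have "\<not> \<pi> i > 0" if "i < N" for i
      using that by blast
    then have "\<pi> i = 0" if "i < N" for i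
      using that stationaryD(1)[OF st, of i] by force
    then have "(\<Sum>i<N. \<pi> i) = 0"
      by simp
    then show False
      using stationaryD(3)[OF st] by simp
  qed
qed (rule assms(2))

lemma stationary_unique:
  assumes st1: "stationary N U \<pi>" and st2: "stationary N U \<sigma>"
  shows "\<pi> = \<sigma>"
proof -
  have "finite C"
    using least_closed_setD(1) by (rule finite_subset) simp
  \<comment> \<open>Subtract the largest multiple of \<sigma> that keeps \<pi> - t \<sigma> nonnegative.\<close>
  define t where "t = Min ((\<lambda>i. \<pi> i / \<sigma> i) ` C)"
  have "t \<in> (\<lambda>i. \<pi> i / \<sigma> i) ` C"
    unfolding t_def using \<open>finite C\<close> least_closed_setD(2) by (intro Min_in) auto
  then obtain i0 where i0: "i0 \<in> C" "t = \<pi> i0 / \<sigma> i0"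
    by blast
  define \<rho> where "\<rho> i = \<pi> i - t * \<sigma> i" for i
  have nonneg: "\<rho> i \<ge> 0" for i
  proof (cases "i \<in> C")
    case True
    then have "t \<le> \<pi> i / \<sigma> i"
      unfolding t_def using \<open>finite C\<close> by simp
    then show ?thesis
      using stationary_positive[OF st2 True] unfolding \<rho>_def by (simp add: le_divide_eq)
  next
    case False
    then show ?thesis
      unfolding \<rho>_def using stationary_vanishes_outside[OF st1] stationary_vanishes_outside[OF st2] by simp
  qed
  have inv: "left_invariant N (trans U) \<rho>"
    using left_invariant_diff_scaled[OF stationaryD(4)[OF st1] stationaryD(4)[OF st2], of t]
    by (simp add: \<rho>_def[abs_def])
  have "\<rho> i0 = 0"
    unfolding \<rho>_def i0(2) using stationary_positive[OF st2 i0(1)] by simp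
  then have "\<rho> i = 0" if "i < N" for i
    using invariant_positive_on_least_closed_set[OF nonneg inv _ i0(1)] nonneg[of i] that by force
  then have "\<pi> i = t * \<sigma> i" if "i < N" for i
    using that unfolding \<rho>_def by simp
  then show ?thesis
    by (rule stationary_eq_if_proportional[OF st1 st2])
qed

end

lemma stationary_exists:
  assumes "U \<in> wcm_space N" "N > 0"
  shows "\<exists>\<pi>. stationary N U \<pi>"
  unfolding stationary_iff
proof (rule stochastic_matrix_stationary_exists)
  show "N > 0" "\<And>i j. trans U i j \<ge> 0"
    by (rule assms(2), rule trans_nonneg)
  show "\<And>i. i < N \<Longrightarrow> (\<Sum>j<N. trans U i j) = 1"
    using assms(1) by (rule trans_row_sum)
qed

lemma good_event_if_no_small_closed_set:
  assumes U: "U \<in> wcm_space N" and N: "N > 0" and "U \<notin> small_closed_set_event N"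
  shows "U \<in> good_event N"
proof -
  have large: "N < 2 * card S" if "S \<subseteq> {..<N}" "S \<noteq> {}" "successor_closed U S" for S
  proof (rule ccontr)
    assume "\<not> N < 2 * card S"
    then have "U \<in> small_closed_set_event N"
      using that unfolding small_closed_set_event_def by (intro CollectI exI[of _ S]) simp
    then show False
      using assms(3) by simp
  qed
  obtain C where C: "least_closed_set N U C"
    using least_closed_set_exists[OF U N large] by blast
  then have "largest_scc N U C"
    using least_closed_set_largest_scc[OF U C] large least_closed_setD[OF U C] by simp
  moreover have "\<exists>!\<pi>. stationary N U \<pi>"
    using stationary_exists[OF U N] stationary_unique[OF U C] by blast
  moreover have "\<forall>\<pi>. stationary N U \<pi> \<longrightarrow> (\<forall>i<N. \<pi> i \<noteq> 0 \<longrightarrow> i \<in> C)"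
    using stationary_vanishes_outside[OF U C] by blast
  ultimately show ?thesis
    unfolding good_event_def by blast
qed

lemma prob_good_event_ge:
  assumes "N > 0"
  shows "1 - measure_pmf.prob (WCM N) (small_closed_set_event N) \<le> measure_pmf.prob (WCM N) (good_event N)"
proof -
  have "1 - measure_pmf.prob (WCM N) (small_closed_set_event N)
      = measure_pmf.prob (WCM N) (- small_closed_set_event N)"
    using measure_pmf.prob_compl[of "small_closed_set_event N" "WCM N"] by (simp add: Compl_eq_Diff_UNIV)
  also have "\<dots> = measure_pmf.prob (WCM N) (- small_closed_set_event N \<inter> set_pmf (WCM N))"
    by (simp add: measure_Int_set_pmf)
  also have "\<dots> \<le> measure_pmf.prob (WCM N) (good_event N)"
    using good_event_if_no_small_closed_set[OF _ assms] by (intro measure_pmf.finite_measure_mono) (auto simp: set_pmf_WCM)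
  finally show ?thesis .
qed

theorem corollary3p2:
  shows "(\<lambda>N. measure_pmf.prob (WCM N) (good_event N)) \<longlonglongrightarrow> 1"
proof (rule tendsto_sandwich)
  have bound: "1 - (300 / real N + 36 / sqrt (real N)) \<le> measure_pmf.prob (WCM N) (good_event N)" if "N \<ge> 7" for N
    using prob_good_event_ge[of N] prob_small_closed_set_le[of N] sum_expected_closed_sets_le[OF that] that
    by linarith
  show "\<forall>\<^sub>F N in sequentially. 1 - (300 / real N + 36 / sqrt (real N)) \<le> measure_pmf.prob (WCM N) (good_event N)"
    using eventually_ge_at_top[of "7::nat"] by (rule eventually_mono) (rule bound)
  show "\<forall>\<^sub>F N in sequentially. measure_pmf.prob (WCM N) (good_event N) \<le> 1"
    by (simp add: measure_pmf.prob_le_1)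
  show "(\<lambda>N. 1 - (300 / real N + 36 / sqrt (real N))) \<longlonglongrightarrow> 1"
    by real_asymp
qed simp

end
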